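(* Let $p$ be the transition density of a subordinator as described in the context, and let $q\colon\mathbb{R}\to[0,\infty]$ be measurable, regarded as the time-independent function $q(u,z)=q(z)$. Then: (i) there exist $0\le\eta<\infty$ and a function $Q\colon\{(s,t):s<t\}\to[0,\infty)$ with $Q(s,u)+Q(u,t)\le Q(s,t)$ for all $s<u<t$ such that $$\int_s^t\int_{\mathbb{R}}p(s,x,u,z)q(z)p(u,z,t,y)\,dz\,du\le[\eta+Q(s,t)]\,p(s,x,t,y)\quad\text{for all }s<t,\ x,y\in\mathbb{R},$$ if and only if $\|q\|_\infty<\infty$; (ii) if there are $s<t$ and $C<\infty$ such that $\tilde p(s,x,t,y)\le C\,p(s,x,t,y)$ for all $x<y$, then $\|q\|_\infty<\infty$.
   Context: A subordinator is a nondecreasing Lévy process on $\mathbb{R}$. We assume its distribution at each time $t>0$ has a density $p_t$ with respect to Lebesgue measure, and set $p(s,x,t,y)=p_{t-s}(y-x)$ for $s<t$; $p(s,x,t,y)=0$ whenever $t\le s$ or $y\le x$, and $p(s,x,t,y)>0$ otherwise. $\|q\|_\infty$ is the essential supremum of $q$. The Schr\"odinger perturbation of $p$ by $q$ is $\tilde p=\sum_{n\ge0}p_n$, where $p_0=p$ and $p_n(s,x,t,y)=\int_s^t\int_{\mathbb{R}}p(s,x,u,z)q(z)p_{n-1}(u,z,t,y)\,dz\,du$. *)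

theory Defs
  imports "HOL-Probability.Probability"
begin

definition subordinator_density :: "(real \<Rightarrow> real \<Rightarrow> real) \<Rightarrow> bool" where
  "subordinator_density p \<longleftrightarrow>
     (\<forall>t>0. p t \<in> borel_measurable lborel) \<and>
     (\<forall>t>0. \<forall>x. 0 \<le> p t x) \<and>
     (\<forall>t>0. (\<integral>\<^sup>+x. ennreal (p t x) \<partial>lborel) = 1) \<and>
     (\<forall>t>0. \<forall>x\<le>0. p t x = 0) \<and>
     (\<forall>t>0. \<forall>x>0. 0 < p t x) \<and>
     (\<forall>s>0. \<forall>t>0. \<forall>x. ennreal (p (s + t) x)
          = (\<integral>\<^sup>+z. ennreal (p s z * p t (x - z)) \<partial>lborel)) \<and>
     (\<forall>e>0. ((\<lambda>t. \<integral>\<^sup>+x\<in>{e..}. ennreal (p t x) \<partial>lborel) \<longlongrightarrow> 0) (at_right 0))"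

definition trans_dens :: "(real \<Rightarrow> real \<Rightarrow> real) \<Rightarrow> real \<Rightarrow> real \<Rightarrow> real \<Rightarrow> real \<Rightarrow> real" where
  "trans_dens p s x t y = (if s < t then p (t - s) (y - x) else 0)"

fun pert :: "(real \<Rightarrow> real \<Rightarrow> real) \<Rightarrow> (real \<Rightarrow> ennreal) \<Rightarrow> nat
             \<Rightarrow> real \<Rightarrow> real \<Rightarrow> real \<Rightarrow> real \<Rightarrow> ennreal" where
  "pert p q 0 s x t y = ennreal (trans_dens p s x t y)"
| "pert p q (Suc n) s x t y =
     (\<integral>\<^sup>+u\<in>{s..t}. (\<integral>\<^sup>+z. ennreal (trans_dens p s x u z) * q z * pert p q n u z t y \<partial>lborel) \<partial>lborel)"

definition pert_sum :: "(real \<Rightarrow> real \<Rightarrow> real) \<Rightarrow> (real \<Rightarrow> ennreal)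
             \<Rightarrow> real \<Rightarrow> real \<Rightarrow> real \<Rightarrow> real \<Rightarrow> ennreal" where
  "pert_sum p q s x t y = (\<Sum>n. pert p q n s x t y)"

end

theory Submission
  imports Defs
begin

text \<open>If q is essentially bounded by M, Chapman-Kolmogorov gives
  p_1(s,x,t,y) \<le> M (t - s) p(s,x,t,y), and Q(s,t) = M (t - s) is additive.
  Conversely, suppose p_1(s,x,t,y) \<le> C p(s,x,t,y) for a single pair s < t. Fix the increment
  y - x = d and integrate over x in an interval: by Tonelli and Chapman-Kolmogorov the left-hand
  side dominates (t - s) p_{t-s}(d) times the integral of q over a slightly shorter interval,
  because the paths from x to x + d pass through every intermediate point. So the integral of q
  over any interval is at most C / (t - s) times its length, and a Vitali covering argument turns
  this into q \<le> C / (t - s) almost everywhere. Part (ii) reduces to the same statement since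
  p_1 is one term of the perturbation series.\<close>

lemma nn_integral_lborel_translate:
  fixes f :: "real \<Rightarrow> ennreal"
  assumes [measurable]: "f \<in> borel_measurable borel"
  shows "(\<integral>\<^sup>+w. f (w - z) \<partial>lborel) = (\<integral>\<^sup>+w. f w \<partial>lborel)"
  using nn_integral_real_affine[of "\<lambda>w. f (w - z)" 1 z] by simp

lemma nn_integral_lborel_reflect:
  fixes f :: "real \<Rightarrow> ennreal"
  assumes [measurable]: "f \<in> borel_measurable borel"
  shows "(\<integral>\<^sup>+w. f (z - w) \<partial>lborel) = (\<integral>\<^sup>+w. f w \<partial>lborel)"
  using nn_integral_real_affine[of "\<lambda>w. f (z - w)" "-1" z] by simp

lemma nn_integral_le_on_open_of_interval_bound:
  fixes q :: "real \<Rightarrow> ennreal"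
  assumes [measurable]: "q \<in> borel_measurable borel" and "0 \<le> K"
    and interval_bound: "\<And>c e. c \<le> e \<Longrightarrow> (\<integral>\<^sup>+z. q z * indicator {c..e} z \<partial>lborel) \<le> ennreal (K * (e - c))"
    and [measurable]: "A \<in> sets borel" and "open U" "A \<subseteq> U"
  shows "(\<integral>\<^sup>+z. q z * indicator A z \<partial>lborel) \<le> ennreal K * emeasure lborel U"
proof -
  define I where "I = {i :: real \<times> real. 0 < snd i \<and> cball (fst i) (snd i) \<subseteq> U}"
  obtain C where C: "countable C" "C \<subseteq> I"
    and disjoint: "pairwise (\<lambda>i j. disjnt (cball (fst i) (snd i)) (cball (fst j) (snd j))) C"
    and negligible: "negligible (A - (\<Union>i\<in>C. cball (fst i) (snd i)))"
  proof (rule Vitali_covering_theorem_cballs[of I snd A fst])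
    fix x d :: real assume "x \<in> A" "0 < d"
    then obtain r where "0 < r" "cball x r \<subseteq> U"
      using \<open>open U\<close> \<open>A \<subseteq> U\<close> open_contains_cball by blast
    with \<open>0 < d\<close> show "\<exists>i. i \<in> I \<and> x \<in> cball (fst i) (snd i) \<and> snd i < d"
      by (intro exI[of _ "(x, min r (d / 2))"]) (auto simp: I_def)
  qed (auto simp: I_def)
  define X where "X i = {fst i - snd i..fst i + snd i}" for i :: "real \<times> real"
  define \<nu> where "\<nu> = density lborel q"
  have X_eq: "(\<Union>i\<in>C. cball (fst i) (snd i)) = \<Union>(X ` C)"
    by (simp add: X_def cball_eq_atLeastAtMost)
  have [measurable]: "\<Union>(X ` C) \<in> sets borel"
    using C(1) by (intro sets.countable_UN'') (auto simp: X_def)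
  have disjoint_X: "disjoint_family_on X C"
    using disjoint by (auto simp: disjoint_family_on_def pairwise_def disjnt_def X_def cball_eq_atLeastAtMost)
  have "A - \<Union>(X ` C) \<in> null_sets lborel"
    using negligible null_sets_completion_iff[of "A - \<Union>(X ` C)" lborel]
    by (simp add: X_eq negligible_iff_null_sets)
  then have "(\<integral>\<^sup>+z. q z * indicator A z \<partial>lborel) \<le> (\<integral>\<^sup>+z. q z * indicator (\<Union>(X ` C)) z \<partial>lborel)"
    by (intro nn_integral_mono_AE) (auto elim!: AE_not_in[THEN eventually_mono] split: split_indicator)
  also have "\<dots> = \<nu> (\<Union>(X ` C))"
    by (simp add: \<nu>_def emeasure_density)
  also have "\<dots> = (\<integral>\<^sup>+i. \<nu> (X i) \<partial>count_space C)"
    using C(1) disjoint_X by (intro emeasure_UN_countable) (auto simp: \<nu>_def X_def)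
  also have "\<dots> \<le> (\<integral>\<^sup>+i. ennreal K * emeasure lborel (X i) \<partial>count_space C)"
  proof (intro nn_integral_mono)
    fix i assume "i \<in> space (count_space C)"
    then have "0 < snd i" using C(2) by (auto simp: I_def)
    then show "\<nu> (X i) \<le> ennreal K * emeasure lborel (X i)"
      using interval_bound[of "fst i - snd i" "fst i + snd i"] \<open>0 \<le> K\<close>
      by (simp add: \<nu>_def X_def emeasure_density ennreal_mult)
  qed
  also have "\<dots> = ennreal K * emeasure lborel (\<Union>(X ` C))"
    by (subst emeasure_UN_countable[OF _ C(1) disjoint_X]) (auto simp: nn_integral_cmult X_def)
  also have "\<dots> \<le> ennreal K * emeasure lborel U"
    using C(2) \<open>open U\<close> by (intro mult_left_mono emeasure_mono) (auto simp: I_def X_def cball_eq_atLeastAtMost)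
  finally show ?thesis .
qed

lemma nn_integral_le_of_interval_bound:
  fixes q :: "real \<Rightarrow> ennreal"
  assumes [measurable]: "q \<in> borel_measurable borel" and "0 \<le> K"
    and "\<And>c e. c \<le> e \<Longrightarrow> (\<integral>\<^sup>+z. q z * indicator {c..e} z \<partial>lborel) \<le> ennreal (K * (e - c))"
    and [measurable]: "A \<in> sets borel"
  shows "(\<integral>\<^sup>+z. q z * indicator A z \<partial>lborel) \<le> ennreal K * emeasure lborel A"
proof (rule ennreal_le_epsilon)
  fix \<epsilon> :: real assume "0 < \<epsilon>"
  then obtain U where U: "open U" "A \<subseteq> U" "emeasure lborel (U - A) < \<epsilon> / (K + 1)"
    using outer_regular_lborel[of A "\<epsilon> / (K + 1)"] \<open>0 \<le> K\<close> by auto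
  have "emeasure lborel U \<le> emeasure lborel A + emeasure lborel (U - A)"
    using U(1) by (intro emeasure_subadditive[THEN order_trans[rotated]] emeasure_mono) auto
  also have "\<dots> \<le> emeasure lborel A + ennreal (\<epsilon> / (K + 1))"
    using U(3) by (intro add_left_mono) simp
  finally have "ennreal K * emeasure lborel U \<le> ennreal K * (emeasure lborel A + ennreal (\<epsilon> / (K + 1)))"
    by (simp add: mult_left_mono)
  also have "\<dots> = ennreal K * emeasure lborel A + ennreal (K * (\<epsilon> / (K + 1)))"
    using \<open>0 \<le> K\<close> \<open>0 < \<epsilon>\<close> by (subst ennreal_mult) (auto simp: distrib_left)
  also have "ennreal (K * (\<epsilon> / (K + 1))) \<le> ennreal \<epsilon>"
    using \<open>0 \<le> K\<close> \<open>0 < \<epsilon>\<close> by (intro ennreal_leI) (simp add: field_simps)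
  finally show "(\<integral>\<^sup>+z. q z * indicator A z \<partial>lborel) \<le> ennreal K * emeasure lborel A + ennreal \<epsilon>"
    using nn_integral_le_on_open_of_interval_bound[OF assms(1-4) U(1,2)] by (auto simp: add_left_mono)
qed

lemma AE_le_of_interval_bound:
  fixes q :: "real \<Rightarrow> ennreal"
  assumes [measurable]: "q \<in> borel_measurable borel" and "0 \<le> K"
    and "\<And>c e. c \<le> e \<Longrightarrow> (\<integral>\<^sup>+z. q z * indicator {c..e} z \<partial>lborel) \<le> ennreal (K * (e - c))"
  shows "AE z in lborel. q z \<le> ennreal K"
proof -
  have "AE z in lborel. z \<notin> {z \<in> {- real N..real N}. ennreal K < q z}" for N :: nat
  proof -
    define A where "A = {z \<in> {- real N..real N}. ennreal K < q z}"
    have [measurable]: "A \<in> sets borel"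
      unfolding A_def by measurable
    have "emeasure lborel A \<le> emeasure lborel {- real N..real N}"
      by (intro emeasure_mono) (auto simp: A_def)
    then have "emeasure lborel A < \<top>"
      by (simp add: order.strict_trans1)
    have K_integral: "(\<integral>\<^sup>+z. ennreal K * indicator A z \<partial>lborel) = ennreal K * emeasure lborel A"
      by (simp add: nn_integral_cmult_indicator)
    have K_finite: "(\<integral>\<^sup>+z. ennreal K * indicator A z \<partial>lborel) \<noteq> \<infinity>"
      unfolding K_integral using \<open>emeasure lborel A < \<top>\<close> by (simp add: ennreal_mult_eq_top_iff)
    have "AE z in lborel. q z * indicator A z \<le> ennreal K * indicator A z"
    proof (rule ccontr)
      assume "\<not> (AE z in lborel. q z * indicator A z \<le> ennreal K * indicator A z)"
      then have "(\<integral>\<^sup>+z. ennreal K * indicator A z \<partial>lborel) < (\<integral>\<^sup>+z. q z * indicator A z \<partial>lborel)"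
        by (intro nn_integral_less[OF _ _ K_finite]) (auto simp: A_def indicator_def less_imp_le)
      also have "\<dots> \<le> ennreal K * emeasure lborel A"
        using assms by (intro nn_integral_le_of_interval_bound) auto
      finally show False by (simp add: K_integral)
    qed
    then show ?thesis
      by (elim eventually_mono) (auto simp: A_def indicator_def)
  qed
  then have "AE z in lborel. \<forall>N :: nat. z \<notin> {z \<in> {- real N..real N}. ennreal K < q z}"
    by (simp add: AE_all_countable)
  then show ?thesis
  proof (elim eventually_mono)
    fix z assume "\<forall>N :: nat. z \<notin> {z \<in> {- real N..real N}. ennreal K < q z}"
    moreover obtain N :: nat where "\<bar>z\<bar> \<le> real N" using real_arch_simple by blast
    ultimately show "q z \<le> ennreal K"
      by (auto simp: not_less dest: spec[of _ N])
  qed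
qed

lemma pert_one:
  "pert p q 1 s x t y = (\<integral>\<^sup>+u. (\<integral>\<^sup>+z. ennreal (trans_dens p s x u z) * q z * ennreal (trans_dens p u z t y) \<partial>lborel) * indicator {s..t} u \<partial>lborel)"
  by (simp add: One_nat_def)

lemma pert_one_le_pert_sum: "pert p q 1 s x t y \<le> pert_sum p q s x t y"
  unfolding pert_sum_def using sum_le_suminf[of "\<lambda>n. pert p q n s x t y" "{1}"] by simp

locale subordinator =
  fixes p :: "real \<Rightarrow> real \<Rightarrow> real"
  assumes subordinator_density: "subordinator_density p"
begin

lemma borel_measurable_p: "0 < t \<Longrightarrow> p t \<in> borel_measurable borel"
  using subordinator_density unfolding subordinator_density_def by auto

lemma p_nonneg: "0 < t \<Longrightarrow> 0 \<le> p t x"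
  using subordinator_density unfolding subordinator_density_def by auto

lemma nn_integral_p: "0 < t \<Longrightarrow> (\<integral>\<^sup>+x. ennreal (p t x) \<partial>lborel) = 1"
  using subordinator_density unfolding subordinator_density_def by auto

lemma p_nonpos_eq_0: "0 < t \<Longrightarrow> x \<le> 0 \<Longrightarrow> p t x = 0"
  using subordinator_density unfolding subordinator_density_def by auto

lemma p_pos: "0 < t \<Longrightarrow> 0 < x \<Longrightarrow> 0 < p t x"
  using subordinator_density unfolding subordinator_density_def by auto

lemma chapman_kolmogorov:
  assumes "0 < a" "0 < b"
  shows "(\<integral>\<^sup>+z. ennreal (p a (z - x)) * ennreal (p b (y - z)) \<partial>lborel) = ennreal (p (a + b) (y - x))"
proof -
  note [measurable] = borel_measurable_p[OF assms(1)] borel_measurable_p[OF assms(2)]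
  have "(\<integral>\<^sup>+z. ennreal (p a (z - x)) * ennreal (p b (y - z)) \<partial>lborel)
      = (\<integral>\<^sup>+z. ennreal (p a z * p b (y - x - z)) \<partial>lborel)"
    using nn_integral_lborel_translate[of "\<lambda>z. ennreal (p a z) * ennreal (p b (y - x - z))" x]
    by (simp add: ennreal_mult p_nonneg assms)
  also have "\<dots> = ennreal (p (a + b) (y - x))"
    using subordinator_density assms unfolding subordinator_density_def by simp
  finally show ?thesis .
qed

lemma cdf_antimono:
  assumes "0 < a" "a \<le> b"
  shows "emeasure (density lborel (\<lambda>w. ennreal (p b w))) {..c}
       \<le> emeasure (density lborel (\<lambda>w. ennreal (p a w))) {..c}"
proof (cases "a = b")
  case False
  define e where "e = b - a"
  have e: "0 < e" and b: "b = a + e" using assms False by (auto simp: e_def)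
  note [measurable] = borel_measurable_p[OF \<open>0 < a\<close>] borel_measurable_p[OF e]
  have "emeasure (density lborel (\<lambda>w. ennreal (p b w))) {..c}
      = (\<integral>\<^sup>+w. (\<integral>\<^sup>+z. ennreal (p a z) * (ennreal (p e (w - z)) * indicator {..c} w) \<partial>lborel) \<partial>lborel)"
    unfolding b using borel_measurable_p[of "a + e"] assms e
    by (simp add: emeasure_density nn_integral_multc[symmetric] mult.assoc
        flip: chapman_kolmogorov[of a e 0, simplified])
  also have "\<dots> = (\<integral>\<^sup>+z. ennreal (p a z) * (\<integral>\<^sup>+w. ennreal (p e (w - z)) * indicator {..c} w \<partial>lborel) \<partial>lborel)"
    by (subst lborel_pair.Fubini') (simp_all add: nn_integral_cmult)
  also have "\<dots> \<le> (\<integral>\<^sup>+z. ennreal (p a z) * indicator {..c} z \<partial>lborel)"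
  proof (intro nn_integral_mono mult_left_mono)
    fix z
    show "(\<integral>\<^sup>+w. ennreal (p e (w - z)) * indicator {..c} w \<partial>lborel) \<le> indicator {..c} z"
    proof (cases "z \<le> c")
      case True
      have "(\<integral>\<^sup>+w. ennreal (p e (w - z)) * indicator {..c} w \<partial>lborel) \<le> (\<integral>\<^sup>+w. ennreal (p e (w - z)) \<partial>lborel)"
        by (intro nn_integral_mono) (simp add: indicator_def)
      also have "\<dots> = 1"
        using nn_integral_lborel_translate[of "\<lambda>w. ennreal (p e w)" z] nn_integral_p[OF e] by simp
      finally show ?thesis using True by simp
    next
      case False
      then have "(\<lambda>w. ennreal (p e (w - z)) * indicator {..c} w) = (\<lambda>w. 0)"
        using p_nonpos_eq_0[OF e] by (auto simp: fun_eq_iff indicator_def)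
      then show ?thesis by simp
    qed
  qed simp
  also have "\<dots> = emeasure (density lborel (\<lambda>w. ennreal (p a w))) {..c}"
    by (simp add: emeasure_density)
  finally show ?thesis .
qed simp

text \<open>The law at time exp \<tau>: parametrising by log-time makes it a kernel on all of the reals.\<close>

definition law_exp :: "real \<Rightarrow> real measure" where
  "law_exp \<tau> = density lborel (\<lambda>w. ennreal (p (exp \<tau>) w))"

definition dens :: "real \<Rightarrow> real \<Rightarrow> real" where
  "dens t x = (if 0 < t then p t x else 0)"

lemma sets_law_exp [measurable_cong]: "sets (law_exp \<tau>) = sets borel"
  by (simp add: law_exp_def)

lemma prob_space_law_exp: "prob_space (law_exp \<tau>)"
  using nn_integral_p[of "exp \<tau>"] borel_measurable_p[of "exp \<tau>"]
  by (intro prob_spaceI) (simp add: law_exp_def emeasure_density)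

lemma emeasure_law_exp: "emeasure (law_exp \<tau>) A = measure (law_exp \<tau>) A"
  using prob_space_law_exp by (simp add: prob_space_def finite_measure.emeasure_eq_measure)

lemma measurable_law_exp: "law_exp \<in> measurable borel (subprob_algebra borel)"
proof (rule measurable_subprob_algebra_generated[where \<Omega>=UNIV and G="range atMost"])
  show "sets (borel :: real measure) = sigma_sets UNIV (range atMost)"
    by (simp add: borel_eq_atMost)
  show "subprob_space (law_exp \<tau>)" for \<tau>
    using prob_space_law_exp prob_space_imp_subprob_space by blast
  show "(\<lambda>\<tau>. emeasure (law_exp \<tau>) UNIV) \<in> borel_measurable borel"
    using prob_space.emeasure_space_1[OF prob_space_law_exp] by (simp add: law_exp_def)
  fix A :: "real set" assume "A \<in> range atMost"
  then obtain c where A: "A = {..c}" by auto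
  have "mono (\<lambda>\<tau>. - measure (law_exp \<tau>) {..c})"
  proof (rule monoI)
    fix \<sigma> \<tau> :: real assume "\<sigma> \<le> \<tau>"
    then have "emeasure (law_exp \<tau>) {..c} \<le> emeasure (law_exp \<sigma>) {..c}"
      unfolding law_exp_def by (intro cdf_antimono) auto
    then show "- measure (law_exp \<sigma>) {..c} \<le> - measure (law_exp \<tau>) {..c}"
      by (simp add: emeasure_law_exp)
  qed
  then have "(\<lambda>\<tau>. - (- measure (law_exp \<tau>) {..c})) \<in> borel_measurable borel"
    by (intro borel_measurable_uminus borel_measurable_mono)
  then show "(\<lambda>\<tau>. emeasure (law_exp \<tau>) A) \<in> borel_measurable borel"
    by (simp add: A emeasure_law_exp)
qed (auto simp: Int_stable_def sets_law_exp)

lemma borel_measurable_p_exp_plus: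
  assumes r: "0 < r"
  shows "(\<lambda>(\<tau>, x). p (exp \<tau> + r) x) \<in> borel_measurable (borel \<Otimes>\<^sub>M borel)"
proof -
  note [measurable] = borel_measurable_p[OF r]
  have law[measurable]: "(\<lambda>(\<tau>::real, x::real). law_exp \<tau>) \<in> measurable (borel \<Otimes>\<^sub>M borel) (subprob_algebra borel)"
    using measurable_compose[OF measurable_fst measurable_law_exp] by (simp add: case_prod_beta')
  have convolution: "(\<integral>\<^sup>+w. ennreal (p r (x - w)) \<partial>law_exp \<tau>) = ennreal (p (exp \<tau> + r) x)" for \<tau> x
    using borel_measurable_p[of "exp \<tau>"] chapman_kolmogorov[of "exp \<tau>" r 0 x] r
    by (simp add: law_exp_def nn_integral_density)
  have "(\<lambda>(\<tau>, x). \<integral>\<^sup>+w. ennreal (p r (x - w)) \<partial>law_exp \<tau>) \<in> borel_measurable (borel \<Otimes>\<^sub>M borel)"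
    using nn_integral_measurable_subprob_algebra2[OF _ law, of "\<lambda>(\<tau>, x) w. ennreal (p r (x - w))"]
    by (simp add: case_prod_beta')
  then have "(\<lambda>(\<tau>, x). enn2real (ennreal (p (exp \<tau> + r) x))) \<in> borel_measurable (borel \<Otimes>\<^sub>M borel)"
    unfolding convolution[symmetric] by measurable
  then show ?thesis
    using p_nonneg r by (simp add: case_prod_beta' add_pos_pos)
qed

text \<open>Joint measurability of p is not among the hypotheses. It follows from the semigroup
  property: for t > r, p t is the convolution of p (t - r) with p r, which is measurable in
  (t, x) because the distribution functions of p t are antitone in t (cdf_antimono).\<close>

lemma borel_measurable_dens: "(\<lambda>(t, x). dens t x) \<in> borel_measurable (borel \<Otimes>\<^sub>M borel)"
proof (rule borel_measurable_LIMSEQ_real)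
  define r where "r n = 1 / real (Suc n)" for n
  have r_pos: "0 < r n" for n by (simp add: r_def)
  have "r \<longlonglongrightarrow> 0"
    unfolding r_def using LIMSEQ_inverse_real_of_nat by (simp add: inverse_eq_divide)
  show "(\<lambda>n. (\<lambda>(t, x). if r n < t then p (exp (ln (t - r n)) + r n) x else 0) y) \<longlonglongrightarrow> (\<lambda>(t, x). dens t x) y" for y
  proof (cases "0 < fst y")
    case True
    then have "eventually (\<lambda>n. r n < fst y) sequentially"
      using \<open>r \<longlonglongrightarrow> 0\<close> by (simp add: order_tendsto_iff)
    then show ?thesis
      by (intro tendsto_eventually, elim eventually_mono) (use True in \<open>auto simp: dens_def split: prod.split\<close>)
  next
    case False
    then have "\<not> r n < fst y" for n
      using r_pos[of n] by linarith
    with False show ?thesis by (auto simp: dens_def split: prod.split)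
  qed
  fix n
  note [measurable] = borel_measurable_p_exp_plus[OF r_pos[of n]]
  have "(\<lambda>(t, x). (\<lambda>(\<tau>, x). p (exp \<tau> + r n) x) (ln (t - r n), x)) \<in> borel_measurable (borel \<Otimes>\<^sub>M borel)"
    by measurable
  then show "(\<lambda>(t, x). if r n < t then p (exp (ln (t - r n)) + r n) x else 0) \<in> borel_measurable (borel \<Otimes>\<^sub>M borel)"
    by measurable
qed

lemma borel_measurable_dens_compose [measurable (raw)]:
  assumes "f \<in> borel_measurable M" "g \<in> borel_measurable M"
  shows "(\<lambda>w. dens (f w) (g w)) \<in> borel_measurable M"
  using measurable_compose[OF measurable_Pair[OF assms] borel_measurable_dens] by simp


lemma trans_dens_eq_dens: "trans_dens p s x t y = dens (t - s) (y - x)"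
  by (simp add: trans_dens_def dens_def)

lemma trans_dens_chapman_kolmogorov_le:
  assumes "s \<le> u" "u \<le> t"
  shows "(\<integral>\<^sup>+z. ennreal (trans_dens p s x u z) * ennreal (trans_dens p u z t y) \<partial>lborel)
    \<le> ennreal (trans_dens p s x t y)"
proof (cases "s < u \<and> u < t")
  case True
  then show ?thesis
    using chapman_kolmogorov[of "u - s" "t - u" x y] by (simp add: trans_dens_def)
next
  case False
  with assms have "(\<lambda>z. ennreal (trans_dens p s x u z) * ennreal (trans_dens p u z t y)) = (\<lambda>z. 0)"
    by (auto simp: trans_dens_def)
  then show ?thesis by simp
qed

lemma pert_one_le_esssup:
  assumes "s < t"
  shows "pert p q 1 s x t y \<le> esssup lborel q * ennreal (t - s) * ennreal (trans_dens p s x t y)"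
proof -
  have inner: "(\<integral>\<^sup>+z. ennreal (trans_dens p s x u z) * q z * ennreal (trans_dens p u z t y) \<partial>lborel)
      \<le> esssup lborel q * ennreal (trans_dens p s x t y)" if "u \<in> {s..t}" for u
  proof -
    have "(\<integral>\<^sup>+z. ennreal (trans_dens p s x u z) * q z * ennreal (trans_dens p u z t y) \<partial>lborel)
        \<le> (\<integral>\<^sup>+z. esssup lborel q * (ennreal (trans_dens p s x u z) * ennreal (trans_dens p u z t y)) \<partial>lborel)"
      using esssup_AE[of q lborel]
      by (intro nn_integral_mono_AE) (auto elim!: eventually_mono intro: mult_right_mono simp: mult_ac)
    also have "\<dots> = esssup lborel q * (\<integral>\<^sup>+z. ennreal (trans_dens p s x u z) * ennreal (trans_dens p u z t y) \<partial>lborel)"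
      using borel_measurable_dens_compose by (intro nn_integral_cmult) (simp add: trans_dens_eq_dens)
    also have "\<dots> \<le> esssup lborel q * ennreal (trans_dens p s x t y)"
      using that by (intro mult_left_mono trans_dens_chapman_kolmogorov_le) auto
    finally show ?thesis .
  qed
  have "pert p q 1 s x t y \<le> (\<integral>\<^sup>+u. esssup lborel q * ennreal (trans_dens p s x t y) * indicator {s..t} u \<partial>lborel)"
    unfolding pert_one by (intro nn_integral_mono) (auto simp: inner split: split_indicator)
  also have "\<dots> = esssup lborel q * ennreal (t - s) * ennreal (trans_dens p s x t y)"
    using assms by (subst nn_integral_cmult_indicator) (auto simp: mult_ac)
  finally show ?thesis .
qed

text \<open>Only x between z - d and z contributes, and that range lies in [a, b].\<close>

lemma nn_integral_window:
  assumes "s < u" "u < t" "a + d \<le> z" "z \<le> b"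
  shows "(\<integral>\<^sup>+x. indicator {a..b} x * (ennreal (dens (u - s) (z - x)) * ennreal (dens (t - u) (x + d - z))) \<partial>lborel)
     = ennreal (p (t - s) d)"
proof -
  note [measurable] = borel_measurable_p[of "u - s"] borel_measurable_p[of "t - u"]
  have "(\<integral>\<^sup>+x. indicator {a..b} x * (ennreal (dens (u - s) (z - x)) * ennreal (dens (t - u) (x + d - z))) \<partial>lborel)
     = (\<integral>\<^sup>+x. ennreal (p (u - s) (z - x)) * ennreal (p (t - u) (d - (z - x))) \<partial>lborel)"
  proof (intro nn_integral_cong)
    fix x
    have "x \<notin> {a..b} \<Longrightarrow> p (u - s) (z - x) = 0 \<or> p (t - u) (d - (z - x)) = 0"
      using assms p_nonpos_eq_0[of "u - s" "z - x"] p_nonpos_eq_0[of "t - u" "d - (z - x)"] by auto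
    then show "indicator {a..b} x * (ennreal (dens (u - s) (z - x)) * ennreal (dens (t - u) (x + d - z)))
       = ennreal (p (u - s) (z - x)) * ennreal (p (t - u) (d - (z - x)))"
      using assms by (cases "x \<in> {a..b}") (auto simp: dens_def algebra_simps)
  qed
  also have "\<dots> = (\<integral>\<^sup>+w. ennreal (p (u - s) w) * ennreal (p (t - u) (d - w)) \<partial>lborel)"
    using assms by (intro nn_integral_lborel_reflect) measurable
  also have "\<dots> = ennreal (p (t - s) d)"
    using chapman_kolmogorov[of "u - s" "t - u" 0 d] assms by simp
  finally show ?thesis .
qed

lemma pert_one_diagonal_lower_bound:
  assumes [measurable]: "q \<in> borel_measurable borel" and "s < t"
  shows "ennreal (t - s) * ennreal (p (t - s) d) * (\<integral>\<^sup>+z. q z * indicator {a + d..b} z \<partial>lborel)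
    \<le> (\<integral>\<^sup>+x. pert p q 1 s x t (x + d) * indicator {a..b} x \<partial>lborel)"
proof -
  define F where "F x u z = indicator {a..b} x * indicator {s..t} u
    * (ennreal (dens (u - s) (z - x)) * q z * ennreal (dens (t - u) (x + d - z)))" for x u z
  have [measurable]: "(\<lambda>(x, u). \<integral>\<^sup>+z. F x u z \<partial>lborel) \<in> borel_measurable (lborel \<Otimes>\<^sub>M lborel)"
    "(\<lambda>(x, z). F x u z) \<in> borel_measurable (lborel \<Otimes>\<^sub>M lborel)" for u
    unfolding F_def by measurable
  define P where "P = ennreal (p (t - s) d)"
  have "ennreal (t - s) * P * (\<integral>\<^sup>+z. q z * indicator {a + d..b} z \<partial>lborel)
      = (\<integral>\<^sup>+u. (P * (\<integral>\<^sup>+z. q z * indicator {a + d..b} z \<partial>lborel)) * indicator {s<..<t} u \<partial>lborel)"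
    using assms by (subst nn_integral_cmult_indicator) (auto simp: mult_ac)
  also have "\<dots> = (\<integral>\<^sup>+u. \<integral>\<^sup>+z. indicator {s<..<t} u * (P * (q z * indicator {a + d..b} z)) \<partial>lborel \<partial>lborel)"
    by (intro nn_integral_cong) (simp add: nn_integral_cmult mult.commute)
  also have "\<dots> \<le> (\<integral>\<^sup>+u. \<integral>\<^sup>+z. \<integral>\<^sup>+x. F x u z \<partial>lborel \<partial>lborel \<partial>lborel)"
  proof (intro nn_integral_mono)
    fix u z
    show "indicator {s<..<t} u * (P * (q z * indicator {a + d..b} z)) \<le> (\<integral>\<^sup>+x. F x u z \<partial>lborel)"
    proof (cases "u \<in> {s<..<t} \<and> z \<in> {a + d..b}")
      case True
      then have "(\<integral>\<^sup>+x. F x u z \<partial>lborel) = q z * (\<integral>\<^sup>+x. indicator {a..b} x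
          * (ennreal (dens (u - s) (z - x)) * ennreal (dens (t - u) (x + d - z))) \<partial>lborel)"
        unfolding F_def by (subst nn_integral_cmult[symmetric]) (auto intro!: nn_integral_cong simp: mult_ac)
      with True show ?thesis
        by (simp add: nn_integral_window P_def mult_ac)
    qed auto
  qed
  also have "\<dots> = (\<integral>\<^sup>+x. \<integral>\<^sup>+u. \<integral>\<^sup>+z. F x u z \<partial>lborel \<partial>lborel \<partial>lborel)"
    by (simp add: lborel_pair.Fubini'[of "\<lambda>x z. F x _ z"] lborel_pair.Fubini'[of "\<lambda>x u. \<integral>\<^sup>+z. F x u z \<partial>lborel"])
  also have "\<dots> = (\<integral>\<^sup>+x. pert p q 1 s x t (x + d) * indicator {a..b} x \<partial>lborel)"
    unfolding pert_one trans_dens_eq_dens F_def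
    by (simp add: nn_integral_multc[symmetric] nn_integral_cmult[symmetric] mult_ac)
  finally show ?thesis unfolding P_def .
qed

lemma nn_integral_Icc_le_of_pert_one_le:
  assumes [measurable]: "q \<in> borel_measurable borel" and "s < t"
    and bound: "\<forall>x y. x < y \<longrightarrow> pert p q 1 s x t y \<le> ennreal C * ennreal (trans_dens p s x t y)"
    and "c \<le> e" "0 < d"
  shows "(\<integral>\<^sup>+z. q z * indicator {c..e} z \<partial>lborel) \<le> ennreal (C / (t - s) * (e - c + d))"
proof -
  define P where "P = p (t - s) d"
  have "0 < P"
    using assms p_pos by (simp add: P_def)
  have "ennreal P * (ennreal (t - s) * (\<integral>\<^sup>+z. q z * indicator {c..e} z \<partial>lborel))
      \<le> (\<integral>\<^sup>+x. pert p q 1 s x t (x + d) * indicator {c - d..e} x \<partial>lborel)"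
    using pert_one_diagonal_lower_bound[of q s t d "c - d" e] assms
    by (simp only: P_def diff_add_cancel mult_ac)
  also have "\<dots> \<le> (\<integral>\<^sup>+x. ennreal C * ennreal P * indicator {c - d..e} x \<partial>lborel)"
  proof (intro nn_integral_mono)
    fix x
    have "pert p q 1 s x t (x + d) \<le> ennreal C * ennreal P"
      using bound[rule_format, of x "x + d"] \<open>0 < d\<close> \<open>s < t\<close> by (simp add: trans_dens_def P_def)
    then show "pert p q 1 s x t (x + d) * indicator {c - d..e} x \<le> ennreal C * ennreal P * indicator {c - d..e} x"
      by (rule mult_right_mono) simp
  qed
  also have "\<dots> = ennreal C * ennreal P * ennreal (e - c + d)"
    using \<open>c \<le> e\<close> \<open>0 < d\<close> by (subst nn_integral_cmult_indicator) (auto simp: algebra_simps)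
  also have "\<dots> = ennreal P * ennreal (C * (e - c + d))"
    using \<open>c \<le> e\<close> \<open>0 < d\<close> by (simp only: ennreal_mult''[of "e - c + d" C] mult_ac)
  also have "\<dots> = ennreal P * (ennreal (t - s) * ennreal (C / (t - s) * (e - c + d)))"
    using assms by (simp add: ennreal_mult'[symmetric])
  finally show ?thesis
    using \<open>0 < P\<close> \<open>s < t\<close> by (simp add: ennreal_mult_le_mult_iff)
qed

lemma esssup_lt_top_of_pert_one_le:
  assumes q: "q \<in> borel_measurable borel" and "s < t"
    and bound: "\<forall>x y. x < y \<longrightarrow> pert p q 1 s x t y \<le> ennreal C * ennreal (trans_dens p s x t y)"
  shows "esssup lborel q < \<top>"
proof -
  define K where "K = max 0 (C / (t - s))"
  have "0 \<le> K" by (simp add: K_def)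
  have "(\<integral>\<^sup>+z. q z * indicator {c..e} z \<partial>lborel) \<le> ennreal (K * (e - c))" if "c \<le> e" for c e
  proof (rule ennreal_le_epsilon)
    fix \<epsilon> :: real assume "0 < \<epsilon>"
    define d where "d = \<epsilon> / (K + 1)"
    have "0 < d"
      using \<open>0 < \<epsilon>\<close> \<open>0 \<le> K\<close> by (simp add: d_def)
    have "K * d \<le> \<epsilon>"
      using \<open>0 < \<epsilon>\<close> \<open>0 \<le> K\<close> by (simp add: d_def divide_le_eq)
    have "C / (t - s) * (e - c + d) \<le> K * (e - c + d)"
      using \<open>c \<le> e\<close> \<open>0 < d\<close> by (intro mult_right_mono) (auto simp: K_def)
    also have "\<dots> \<le> K * (e - c) + \<epsilon>"
      using \<open>K * d \<le> \<epsilon>\<close> by (simp add: distrib_left)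
    finally have "C / (t - s) * (e - c + d) \<le> K * (e - c) + \<epsilon>" .
    have "(\<integral>\<^sup>+z. q z * indicator {c..e} z \<partial>lborel) \<le> ennreal (C / (t - s) * (e - c + d))"
      using nn_integral_Icc_le_of_pert_one_le[OF q \<open>s < t\<close> bound \<open>c \<le> e\<close> \<open>0 < d\<close>] .
    also have "\<dots> \<le> ennreal (K * (e - c) + \<epsilon>)"
      using \<open>C / (t - s) * (e - c + d) \<le> K * (e - c) + \<epsilon>\<close> by (rule ennreal_leI)
    also have "\<dots> = ennreal (K * (e - c)) + ennreal \<epsilon>"
      using \<open>c \<le> e\<close> \<open>0 \<le> K\<close> \<open>0 < \<epsilon>\<close> by (intro ennreal_plus) auto
    finally show "(\<integral>\<^sup>+z. q z * indicator {c..e} z \<partial>lborel) \<le> ennreal (K * (e - c)) + ennreal \<epsilon>" .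
  qed
  then have "AE z in lborel. q z \<le> ennreal K"
    using q \<open>0 \<le> K\<close> by (intro AE_le_of_interval_bound)
  then have "esssup lborel q \<le> ennreal K"
    using q by (intro esssup_I) auto
  then show ?thesis
    by (simp add: le_less_trans)
qed

end

theorem corollary3p4:
  fixes p :: "real \<Rightarrow> real \<Rightarrow> real" and q :: "real \<Rightarrow> ennreal"
  assumes "subordinator_density p"
    and "q \<in> borel_measurable lborel"
  shows "((\<exists>\<eta>::real. 0 \<le> \<eta> \<and> (\<exists>Q :: real \<Rightarrow> real \<Rightarrow> real.
              (\<forall>s t. s < t \<longrightarrow> 0 \<le> Q s t) \<and>
              (\<forall>s u t. s < u \<and> u < t \<longrightarrow> Q s u + Q u t \<le> Q s t) \<and>
              (\<forall>s t x y. s < t \<longrightarrow>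
                 pert p q 1 s x t y \<le> ennreal (\<eta> + Q s t) * ennreal (trans_dens p s x t y))))
          \<longleftrightarrow> esssup lborel q < \<top>)
     \<and> ((\<exists>s t (C::real). s < t \<and>
            (\<forall>x y. x < y \<longrightarrow> pert_sum p q s x t y \<le> ennreal C * ennreal (trans_dens p s x t y)))
          \<longrightarrow> esssup lborel q < \<top>)"
proof -
  interpret subordinator p by (rule subordinator.intro) fact
  have q: "q \<in> borel_measurable borel" using assms(2) by simp
  define M where "M = enn2real (esssup lborel q)"
  have pert_one_bound: "pert p q 1 s x t y \<le> ennreal (0 + M * (t - s)) * ennreal (trans_dens p s x t y)"
    if "esssup lborel q < \<top>" "s < t" for s t x y
  proof -
    have "ennreal (0 + M * (t - s)) = esssup lborel q * ennreal (t - s)"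
      using that by (simp add: M_def ennreal_mult ennreal_enn2real_if)
    then show ?thesis
      using pert_one_le_esssup[OF \<open>s < t\<close>] by (simp only:)
  qed
  have additive: "M * (u - s) + M * (t - u) \<le> M * (t - s)" for s u t :: real
    by (simp add: algebra_simps)
  have nonneg: "s < t \<Longrightarrow> 0 \<le> M * (t - s)" for s t :: real
    by (simp add: M_def)
  show ?thesis
    apply (intro conjI iffI impI)
    subgoal premises bounded
    proof -
      from bounded obtain \<eta> Q where
        "\<forall>s t x y. s < t \<longrightarrow> pert p q 1 s x t y \<le> ennreal (\<eta> + Q s t) * ennreal (trans_dens p s x t y)"
        by blast
      then show ?thesis
        using esssup_lt_top_of_pert_one_le[OF q zero_less_one, of "\<eta> + Q 0 1"] zero_less_one by blast
    qed
    subgoal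
      by (intro exI[of _ 0] exI[of _ "\<lambda>s t. M * (t - s)"] conjI allI impI)
        (simp_all only: pert_one_bound nonneg additive order_refl)
    subgoal
      by (elim exE conjE) (rule esssup_lt_top_of_pert_one_le[OF q], assumption,
          blast intro: order_trans[OF pert_one_le_pert_sum])
    done
qed

end
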